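(* Let $V$ be an $n$-dimensional vector space over a field of characteristic zero, let $A^{ab}$ and $B_{ab}$ be 2-forms, and let $P^a{}_b=A^{ac}B_{bc}$ and $T=P-\frac14[P]$. For even $k\geq 0$ define the $(1,1)$-tensors $$\mathrm{Idn}_k=\delta^{[a}_b A^{c_1c_2}\cdots A^{c_{k-1}c_k]}B_{c_1c_2}\cdots B_{c_{k-1}c_k},\qquad \mathrm{Id}_k=A^{a[c_1}A^{c_2c_3}\cdots A^{c_kc_{k+1}]}B_{bc_1}B_{c_2c_3}\cdots B_{c_kc_{k+1}}$$ (so $\mathrm{Id}_0=P$). Then for every even $k\geq2$: $$\mathrm{Idn}_k=-\frac{k}{k+1}\Bigl(\mathrm{Id}_{k-2}-\frac1k[\mathrm{Id}_{k-2}]\Bigr),\qquad \mathrm{Id}_k=-\frac{k}{k+1}P\Bigl(\mathrm{Id}_{k-2}-\frac1k[\mathrm{Id}_{k-2}]\Bigr),$$ and, if $n\neq4$, $$\mathrm{Id}_k=-\frac{k}{k+1}\Bigl(T\,\mathrm{Id}_{k-2}-\frac{1}{n-4}[T]\,\mathrm{Id}_{k-2}-\frac1k[\mathrm{Id}_{k-2}]\,T+\frac{1}{k(n-4)}[T][\mathrm{Id}_{k-2}]\Bigr).$$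
   Context: Square brackets around indices denote antisymmetrisation over the enclosed upper indices (here over $a,c_1,\dots,c_k$ in $\mathrm{Idn}_k$ and over $c_1,\dots,c_{k+1}$ in $\mathrm{Id}_k$). Index-free notation for $(1,1)$-tensors: products denote composition, $[X]=X^c{}_c$ is the trace, and scalar terms are multiplied by the identity $\delta^a_b$. No metric is assumed. *)

theory Defs
  imports "HOL-Combinatorics.Permutations"
begin

text \<open>Coordinates w.r.t. a basis of the n-dimensional space V: indices range over {..<n}.
  A (1,1)-tensor X^a_b is a function X a b (a upper, b lower); a 2-form A^{ab} is A a b.\<close>

definition tuples :: "nat \<Rightarrow> nat \<Rightarrow> nat list set" where
  "tuples n m = {cs. length cs = m \<and> set cs \<subseteq> {..<n}}"

definition alt :: "(nat list \<Rightarrow> 'a::field_char_0) \<Rightarrow> nat list \<Rightarrow> 'a" where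
  "alt F xs = (1 / fact (length xs)) *
     (\<Sum>\<sigma> | \<sigma> permutes {..<length xs}.
        of_int (sign \<sigma>) * F (map (\<lambda>i. xs ! \<sigma> i) [0..<length xs]))"

definition pprod :: "(nat \<Rightarrow> nat \<Rightarrow> 'a::field_char_0) \<Rightarrow> nat list \<Rightarrow> 'a" where
  "pprod X ys = (\<Prod>j<length ys div 2. X (ys ! (2*j)) (ys ! (2*j+1)))"

definition delta :: "nat \<Rightarrow> nat \<Rightarrow> 'a::field_char_0" where
  "delta a b = (if a = b then 1 else 0)"

definition tr :: "nat \<Rightarrow> (nat \<Rightarrow> nat \<Rightarrow> 'a::field_char_0) \<Rightarrow> 'a" where
  "tr n X = (\<Sum>c<n. X c c)"

definition comp :: "nat \<Rightarrow> (nat \<Rightarrow> nat \<Rightarrow> 'a::field_char_0) \<Rightarrow> (nat \<Rightarrow> nat \<Rightarrow> 'a) \<Rightarrow> nat \<Rightarrow> nat \<Rightarrow> 'a" where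
  "comp n X Y a b = (\<Sum>c<n. X a c * Y c b)"

definition Pt :: "nat \<Rightarrow> (nat \<Rightarrow> nat \<Rightarrow> 'a::field_char_0) \<Rightarrow> (nat \<Rightarrow> nat \<Rightarrow> 'a) \<Rightarrow> nat \<Rightarrow> nat \<Rightarrow> 'a" where
  "Pt n A B a b = (\<Sum>c<n. A a c * B b c)"

definition Tt :: "nat \<Rightarrow> (nat \<Rightarrow> nat \<Rightarrow> 'a::field_char_0) \<Rightarrow> (nat \<Rightarrow> nat \<Rightarrow> 'a) \<Rightarrow> nat \<Rightarrow> nat \<Rightarrow> 'a" where
  "Tt n A B a b = Pt n A B a b - (1/4) * tr n (Pt n A B) * delta a b"

definition Idn :: "nat \<Rightarrow> (nat \<Rightarrow> nat \<Rightarrow> 'a::field_char_0) \<Rightarrow> (nat \<Rightarrow> nat \<Rightarrow> 'a) \<Rightarrow> nat \<Rightarrow> nat \<Rightarrow> nat \<Rightarrow> 'a" where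
  "Idn n A B k a b = (\<Sum>cs\<in>tuples n k.
      alt (\<lambda>xs. delta (xs ! 0) b * pprod A (drop 1 xs)) (a # cs) * pprod B cs)"

definition Idk :: "nat \<Rightarrow> (nat \<Rightarrow> nat \<Rightarrow> 'a::field_char_0) \<Rightarrow> (nat \<Rightarrow> nat \<Rightarrow> 'a) \<Rightarrow> nat \<Rightarrow> nat \<Rightarrow> nat \<Rightarrow> 'a" where
  "Idk n A B k a b = (\<Sum>cs\<in>tuples n (k+1).
      alt (\<lambda>xs. A a (xs ! 0) * pprod A (drop 1 xs)) cs * B b (cs ! 0) * pprod B (drop 1 cs))"

end

theory Submission
  imports Defs
begin

text \<open>
  Both \<open>Idn_k\<close> and \<open>Id_k\<close> contract \<open>B_{c_1c_2} ... B_{c_{k-1}c_k}\<close> with an antisymmetrisation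
  over \<open>k+1\<close> slots whose first slot carries the free index. Expanding it along that slot
  (Laplace) gives \<open>k+1\<close> terms. The first is a multiple of
  \<open>[Id_{k-2}] = A^{[c_1c_2} ... A^{c_{k-1}c_k]} B_{c_1c_2} ... B_{c_{k-1}c_k}\<close>. The other \<open>k\<close>
  terms coincide: a permutation that brings any slot to the front while mapping index pairs
  to index pairs changes both products of skew 2-tensors by the same sign. Each of them is a
  contraction of \<open>Id_{k-2}\<close>, since \<open>A^{a[c_1} A^{c_2c_3} ...]\<close> is already antisymmetric in all
  its indices; for \<open>Id_k\<close> one more use of the skew-symmetry of \<open>B\<close> turns it into \<open>P Id_{k-2}\<close>.
  This gives the factor \<open>k/(k+1)\<close> and the forms in \<open>P\<close>; the form in \<open>T\<close> follows from
  \<open>P = T + [P]/4\<close> and \<open>[T] = (1 - n/4)[P]\<close>.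
\<close>

section \<open>Antisymmetrisation\<close>

abbreviation perms :: "nat \<Rightarrow> (nat \<Rightarrow> nat) set" where
  "perms N \<equiv> {\<sigma>. \<sigma> permutes {..<N}}"

lemma sign_compose_permutes:
  assumes "\<sigma> permutes {..<N::nat}" "\<tau> permutes {..<N}"
  shows "sign (\<sigma> \<circ> \<tau>) = sign \<sigma> * sign \<tau>"
  using assms by (simp add: sign_compose permutes_imp_permutation[OF finite_lessThan])

lemma of_int_sign_mult_self: "(of_int (sign p) :: 'a::ring_1) * of_int (sign p) = 1"
  by (metis of_int_1 of_int_mult sign_idempotent)

lemma alt_eq_sum_permute_list:
  "alt F xs = (1 / fact (length xs)) *
     (\<Sum>\<sigma>\<in>perms (length xs). of_int (sign \<sigma>) * F (permute_list \<sigma> xs))"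
  by (simp add: alt_def permute_list_def)

lemma alt_cong:
  assumes "\<And>ys. length ys = length xs \<Longrightarrow> set ys = set xs \<Longrightarrow> F ys = G ys"
  shows "alt F xs = alt G xs"
  unfolding alt_eq_sum_permute_list using assms
  by (intro arg_cong2[where f="(*)"] refl sum.cong) auto

lemma alt_cmult: "alt (\<lambda>ws. c * G ws) xs = c * alt G xs"
  unfolding alt_eq_sum_permute_list by (simp add: sum_distrib_left algebra_simps)

lemma alt_permute_list:
  assumes \<pi>: "\<pi> permutes {..<length xs}"
  shows "alt F (permute_list \<pi> xs) = of_int (sign \<pi>) * alt F xs"
proof -
  let ?h = "\<lambda>\<sigma>. of_int (sign \<sigma>) * F (permute_list \<sigma> xs)"
  have "(\<Sum>\<sigma>\<in>perms (length xs). of_int (sign \<sigma>) * F (permute_list \<sigma> (permute_list \<pi> xs)))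
      = (\<Sum>\<sigma>\<in>perms (length xs). of_int (sign \<pi>) * ?h (\<pi> \<circ> \<sigma>))"
  proof (rule sum.cong[OF refl])
    fix \<sigma> assume "\<sigma> \<in> perms (length xs)"
    then have "sign (\<pi> \<circ> \<sigma>) = sign \<pi> * sign \<sigma>"
      and "permute_list (\<pi> \<circ> \<sigma>) xs = permute_list \<sigma> (permute_list \<pi> xs)"
      using \<pi> by (simp_all add: sign_compose_permutes permute_list_compose)
    then show "of_int (sign \<sigma>) * F (permute_list \<sigma> (permute_list \<pi> xs)) = of_int (sign \<pi>) * ?h (\<pi> \<circ> \<sigma>)"
      by (simp add: mult.assoc[symmetric] of_int_sign_mult_self)
  qed
  also have "\<dots> = of_int (sign \<pi>) * (\<Sum>\<sigma>\<in>perms (length xs). ?h \<sigma>)"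
    unfolding sum_distrib_left[symmetric]
    by (rule arg_cong[where f="(*) _"], rule sum.reindex_bij_witness[where i="\<lambda>\<sigma>. inv \<pi> \<circ> \<sigma>" and j="\<lambda>\<sigma>. \<pi> \<circ> \<sigma>"])
       (use \<pi> in \<open>auto simp: o_assoc permutes_inv_o permutes_compose permutes_inv\<close>)
  finally show ?thesis unfolding alt_eq_sum_permute_list by simp
qed

lemma alt_swap_Cons_Cons: "alt F (c # e # fs) = - alt F (e # c # fs)"
proof -
  have tp: "transpose 0 (Suc 0) permutes {..<length (e # c # fs)}"
    by (intro permutes_swap_id) auto
  have "permute_list (transpose 0 (Suc 0)) (e # c # fs) = c # e # fs"
  proof (rule nth_equalityI)
    fix i assume "i < length (permute_list (transpose 0 (Suc 0)) (e # c # fs))"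
    then show "permute_list (transpose 0 (Suc 0)) (e # c # fs) ! i = (c # e # fs) ! i"
      using tp by (cases i; cases "i - 1") (simp_all add: permute_list_nth)
  qed simp
  then show ?thesis using alt_permute_list[OF tp, of F] by (simp add: sign_swap_id)
qed

lemma permutes_Suc_image_iff:
  "\<sigma> permutes Suc ` {..<N} \<longleftrightarrow> \<sigma> permutes {..<Suc N} \<and> \<sigma> 0 = 0"
proof
  assume "\<sigma> permutes Suc ` {..<N}"
  then show "\<sigma> permutes {..<Suc N} \<and> \<sigma> 0 = 0"
    by (auto intro: permutes_subset permutes_not_in simp: lessThan_Suc_eq_insert_0)
next
  assume \<sigma>: "\<sigma> permutes {..<Suc N} \<and> \<sigma> 0 = 0"
  then have "transpose 0 (\<sigma> 0) \<circ> \<sigma> permutes Suc ` {..<N}"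
    by (intro permutes_insert_lemma) (simp_all add: lessThan_Suc_eq_insert_0)
  then show "\<sigma> permutes Suc ` {..<N}" using \<sigma> by simp
qed

lemma permute_list_shift_perm:
  assumes \<tau>: "\<tau> permutes {..<N}" and len: "length ys = Suc N"
  shows "permute_list (map_permutation {..<N} Suc \<tau>) ys = hd ys # permute_list \<tau> (tl ys)"
proof (rule nth_equalityI)
  fix i assume i: "i < length (permute_list (map_permutation {..<N} Suc \<tau>) ys)"
  have perm: "map_permutation {..<N} Suc \<tau> permutes {..<length ys}"
    using map_permutation_permutes[OF _ \<tau>, of Suc "Suc ` {..<N}"] len
    by (auto simp: bij_betw_def permutes_Suc_image_iff)
  show "permute_list (map_permutation {..<N} Suc \<tau>) ys ! i = (hd ys # permute_list \<tau> (tl ys)) ! i"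
  proof (cases i)
    case 0
    have "map_permutation {..<N} Suc \<tau> 0 = 0"
      by (auto simp: map_permutation_def restrict_id_def)
    moreover have "ys \<noteq> []" using len by auto
    ultimately show ?thesis
      using 0 len by (simp add: permute_list_nth[OF perm] hd_conv_nth)
  next
    case (Suc j)
    then have "j < N" using i len by simp
    moreover from this have "\<tau> j < N" using permutes_in_image[OF \<tau>, of j] by simp
    ultimately show ?thesis
      using Suc \<tau> len by (simp add: permute_list_nth[OF perm] permute_list_nth map_permutation_apply nth_tl)
  qed
qed (simp add: len)

lemma sum_permutes_Suc_image:
  assumes len: "length ys = Suc N"
  shows "(\<Sum>\<sigma> | \<sigma> permutes Suc ` {..<N}. of_int (sign \<sigma>) * F (permute_list \<sigma> ys))
       = fact N * alt (\<lambda>ws. F (hd ys # ws)) (tl ys)"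
proof -
  let ?shift = "map_permutation {..<N} Suc"
  have "bij_betw ?shift (perms N) {\<sigma>. \<sigma> permutes Suc ` {..<N}}"
  proof -
    have "?shift = (\<lambda>\<pi> x. if x \<in> Suc ` {..<N} then Suc (\<pi> (inv_into {..<N} Suc x)) else x)"
      by (auto simp: fun_eq_iff map_permutation_def restrict_id_def)
    then show ?thesis
      using bij_betw_permutations[of Suc "{..<N}" "Suc ` {..<N}"] by (simp add: bij_betw_def)
  qed
  then have "(\<Sum>\<sigma> | \<sigma> permutes Suc ` {..<N}. of_int (sign \<sigma>) * F (permute_list \<sigma> ys))
      = (\<Sum>\<tau>\<in>perms N. of_int (sign (?shift \<tau>)) * F (permute_list (?shift \<tau>) ys))"
    by (rule sum.reindex_bij_betw[symmetric])
  also have "\<dots> = (\<Sum>\<tau>\<in>perms N. of_int (sign \<tau>) * F (hd ys # permute_list \<tau> (tl ys)))"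
    using len by (intro sum.cong refl) (simp add: sign_map_permutation permute_list_shift_perm)
  finally show ?thesis
    using len by (simp add: alt_eq_sum_permute_list)
qed

lemma alt_laplace_expansion:
  assumes len: "length ys = Suc N"
  shows "alt F ys = 1 / of_nat (Suc N) *
    (\<Sum>b<Suc N. of_int (sign (transpose 0 b)) *
       alt (\<lambda>ws. F (hd (permute_list (transpose 0 b) ys) # ws)) (tl (permute_list (transpose 0 b) ys)))"
    (is "_ = _ * (\<Sum>b<Suc N. ?s b * ?X b)")
proof -
  let ?h = "\<lambda>\<sigma>. of_int (sign \<sigma>) * F (permute_list \<sigma> ys)"
  have "(\<Sum>\<sigma>\<in>perms (Suc N). ?h \<sigma>)
      = (\<Sum>b\<in>insert 0 (Suc ` {..<N}). \<Sum>\<sigma> | \<sigma> permutes Suc ` {..<N}. ?h (transpose 0 b \<circ> \<sigma>))"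
    unfolding lessThan_Suc_eq_insert_0 by (rule sum_over_permutations_insert) auto
  also have "\<dots> = (\<Sum>b<Suc N. ?s b * (fact N * ?X b))"
    unfolding lessThan_Suc_eq_insert_0[symmetric]
  proof (rule sum.cong[OF refl])
    fix b assume "b \<in> {..<Suc N}"
    then have t: "transpose 0 b permutes {..<Suc N}" by (intro permutes_swap_id) auto
    have "?h (transpose 0 b \<circ> \<sigma>) = ?s b * (of_int (sign \<sigma>) * F (permute_list \<sigma> (permute_list (transpose 0 b) ys)))"
      if "\<sigma> permutes Suc ` {..<N}" for \<sigma>
      using that t len by (simp add: permutes_Suc_image_iff sign_compose_permutes permute_list_compose)
    then show "(\<Sum>\<sigma> | \<sigma> permutes Suc ` {..<N}. ?h (transpose 0 b \<circ> \<sigma>)) = ?s b * (fact N * ?X b)"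
      using len by (simp add: sum_distrib_left[symmetric] sum_permutes_Suc_image)
  qed
  also have "\<dots> = fact N * (\<Sum>b<Suc N. ?s b * ?X b)"
    by (subst sum_distrib_left) (simp only: mult.left_commute)
  finally show ?thesis
    using len by (simp add: alt_eq_sum_permute_list[of F ys] fact_Suc del: of_nat_Suc)
qed

lemma alt_Cons_expand:
  assumes len: "length cs = N"
  shows "alt (\<lambda>xs. u (xs ! 0) * G (drop 1 xs)) (a # cs) =
     1 / of_nat (Suc N) * (u a * alt G cs - (\<Sum>i<N. u (cs ! i) * alt G (cs[i := a])))"
proof -
  have swap: "permute_list (transpose 0 (Suc i)) (a # cs) = cs ! i # cs[i := a]" if "i < N" for i
  proof -
    have t: "transpose 0 (Suc i) permutes {..<length (a # cs)}"
      using that len by (intro permutes_swap_id) auto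
    show ?thesis
      by (rule nth_equalityI) (use that len in \<open>auto simp: permute_list_nth[OF t] transpose_def nth_Cons' nth_list_update\<close>)
  qed
  have "alt (\<lambda>xs. u (xs ! 0) * G (drop 1 xs)) (a # cs) = 1 / of_nat (Suc N) *
      (\<Sum>b<Suc N. of_int (sign (transpose 0 b)) * (u (hd (permute_list (transpose 0 b) (a # cs))) *
         alt G (tl (permute_list (transpose 0 b) (a # cs)))))"
    using len by (simp add: alt_laplace_expansion alt_cmult)
  also have "\<dots> = 1 / of_nat (Suc N) * (u a * alt G cs - (\<Sum>i<N. u (cs ! i) * alt G (cs[i := a])))"
    by (subst sum.lessThan_Suc_shift) (simp add: swap sign_swap_id sum_negf)
  finally show ?thesis .
qed

lemma sum_perms_moving_to_front:
  assumes len: "length ys = Suc N"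
    and g: "g permutes {..<Suc N}" "g p = 0"
    and F_g: "\<And>zs. mset zs = mset ys \<Longrightarrow> F (permute_list g zs) = of_int (sign g) * F zs"
  shows "(\<Sum>\<sigma> | \<sigma> permutes {..<Suc N} \<and> \<sigma> p = 0. of_int (sign \<sigma>) * F (permute_list \<sigma> ys))
       = fact N * alt (\<lambda>ws. F (hd ys # ws)) (tl ys)"
proof -
  let ?h = "\<lambda>\<sigma>. of_int (sign \<sigma>) * F (permute_list \<sigma> ys)"
  have g_inv: "inv g 0 = p" using permutes_inv_eq[OF g(1)] g(2) by simp
  have h_g: "?h (\<tau> \<circ> g) = ?h \<tau>" if "\<tau> permutes {..<Suc N}" for \<tau>
  proof -
    have "?h (\<tau> \<circ> g) = of_int (sign \<tau>) * (of_int (sign g) * F (permute_list g (permute_list \<tau> ys)))"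
      using that g len by (simp add: sign_compose_permutes permute_list_compose mult_ac)
    also have "\<dots> = of_int (sign \<tau>) * (of_int (sign g) * of_int (sign g)) * F (permute_list \<tau> ys)"
      using that len by (simp add: F_g mult_ac)
    finally show ?thesis by (simp add: of_int_sign_mult_self)
  qed
  have "(\<Sum>\<sigma> | \<sigma> permutes {..<Suc N} \<and> \<sigma> p = 0. ?h \<sigma>) = (\<Sum>\<tau> | \<tau> permutes Suc ` {..<N}. ?h \<tau>)"
  proof (rule sym, rule sum.reindex_bij_witness[where i="\<lambda>\<sigma>. \<sigma> \<circ> inv g" and j="\<lambda>\<tau>. \<tau> \<circ> g"])
    fix \<tau> assume "\<tau> \<in> {\<tau>. \<tau> permutes Suc ` {..<N}}"
    then have \<tau>: "\<tau> permutes {..<Suc N}" "\<tau> 0 = 0" by (simp_all add: permutes_Suc_image_iff)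
    show "\<tau> \<circ> g \<circ> inv g = \<tau>"
      using g(1) by (simp add: o_assoc[symmetric] permutes_inv_o)
    show "\<tau> \<circ> g \<in> {\<sigma>. \<sigma> permutes {..<Suc N} \<and> \<sigma> p = 0}"
      using \<tau> g by (simp add: permutes_compose)
    show "?h (\<tau> \<circ> g) = ?h \<tau>" by (rule h_g[OF \<tau>(1)])
  next
    fix \<sigma> assume "\<sigma> \<in> {\<sigma>. \<sigma> permutes {..<Suc N} \<and> \<sigma> p = 0}"
    then have \<sigma>: "\<sigma> permutes {..<Suc N}" "\<sigma> p = 0" by simp_all
    show "\<sigma> \<circ> inv g \<circ> g = \<sigma>"
      using g(1) by (simp add: o_assoc[symmetric] permutes_inv_o)
    show "\<sigma> \<circ> inv g \<in> {\<tau>. \<tau> permutes Suc ` {..<N}}"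
      using \<sigma> g(1) g_inv by (simp add: permutes_Suc_image_iff permutes_compose permutes_inv)
  qed
  also have "\<dots> = fact N * alt (\<lambda>ws. F (hd ys # ws)) (tl ys)"
    by (rule sum_permutes_Suc_image[OF len])
  finally show ?thesis .
qed

lemma alt_eq_alt_tl:
  assumes len: "length ys = Suc N"
    and g: "\<And>p. p < Suc N \<Longrightarrow> g p permutes {..<Suc N} \<and> g p p = 0"
    and F_g: "\<And>p zs. p < Suc N \<Longrightarrow> mset zs = mset ys \<Longrightarrow>
                F (permute_list (g p) zs) = of_int (sign (g p)) * F zs"
  shows "alt F ys = alt (\<lambda>ws. F (hd ys # ws)) (tl ys)"
proof -
  let ?h = "\<lambda>\<sigma>. of_int (sign \<sigma>) * F (permute_list \<sigma> ys)"
  have "(\<Sum>\<sigma>\<in>perms (Suc N). ?h \<sigma>) = (\<Sum>p<Suc N. \<Sum>\<sigma> | \<sigma> \<in> perms (Suc N) \<and> inv \<sigma> 0 = p. ?h \<sigma>)"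
  proof (rule sum.group[symmetric])
    show "(\<lambda>\<sigma>. inv \<sigma> 0) ` perms (Suc N) \<subseteq> {..<Suc N}"
      using permutes_in_image[OF permutes_inv, of _ "{..<Suc N}" 0] by auto
  qed (simp_all add: finite_permutations)
  also have "\<dots> = (\<Sum>p<Suc N. fact N * alt (\<lambda>ws. F (hd ys # ws)) (tl ys))"
  proof (rule sum.cong[OF refl])
    fix p assume p: "p \<in> {..<Suc N}"
    have "{\<sigma>. \<sigma> \<in> perms (Suc N) \<and> inv \<sigma> 0 = p} = {\<sigma>. \<sigma> permutes {..<Suc N} \<and> \<sigma> p = 0}"
      using permutes_inv_eq by fastforce
    moreover have "(\<Sum>\<sigma> | \<sigma> permutes {..<Suc N} \<and> \<sigma> p = 0. ?h \<sigma>) = fact N * alt (\<lambda>ws. F (hd ys # ws)) (tl ys)"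
      using p g[of p] F_g[of p] by (intro sum_perms_moving_to_front[OF len, where g="g p"]) auto
    ultimately show "(\<Sum>\<sigma> | \<sigma> \<in> perms (Suc N) \<and> inv \<sigma> 0 = p. ?h \<sigma>) = fact N * alt (\<lambda>ws. F (hd ys # ws)) (tl ys)"
      by simp
  qed
  also have "\<dots> = fact (Suc N) * alt (\<lambda>ws. F (hd ys # ws)) (tl ys)"
    by (simp add: fact_Suc)
  finally show ?thesis
    unfolding alt_eq_sum_permute_list[of F ys] len by (simp del: fact_Suc)
qed

section \<open>Products over consecutive index pairs\<close>

lemma pprod_Cons_Cons: "pprod X (x # y # zs) = X x y * pprod X zs"
proof -
  have "pprod X (x # y # zs) = (\<Prod>j<Suc (length zs div 2). X ((x # y # zs) ! (2*j)) ((x # y # zs) ! (2*j+1)))"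
    by (simp add: pprod_def)
  also have "\<dots> = X x y * pprod X zs"
    by (subst prod.lessThan_Suc_shift) (simp add: pprod_def)
  finally show ?thesis .
qed

lemma pprod_permute_pairs:
  assumes len: "length ws = 2 * m" and ws: "set ws \<subseteq> {..<n}"
    and skew: "\<forall>i<n. \<forall>j<n. X i j = - X j i"
    and g: "g permutes {..<2*m}"
    and \<rho>: "\<rho> permutes {..<m}" and sw: "sw \<subseteq> {..<m}"
    and pairs: "\<And>j. j < m \<Longrightarrow> (j \<notin> sw \<and> g (2*j) = 2 * \<rho> j \<and> g (2*j+1) = 2 * \<rho> j + 1)
                          \<or> (j \<in> sw \<and> g (2*j) = 2 * \<rho> j + 1 \<and> g (2*j+1) = 2 * \<rho> j)"
  shows "pprod X (permute_list g ws) = (-1) ^ card sw * pprod X ws"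
proof -
  let ?f = "\<lambda>i. X (ws ! (2*i)) (ws ! (2*i+1))"
  have "pprod X (permute_list g ws) = (\<Prod>j<m. X (ws ! g (2*j)) (ws ! g (2*j+1)))"
    using len g by (simp add: pprod_def permute_list_nth)
  also have "\<dots> = (\<Prod>j<m. (if j \<in> sw then -1 else 1) * ?f (\<rho> j))"
  proof (rule prod.cong[OF refl])
    fix j assume j: "j \<in> {..<m}"
    then have "\<rho> j < m" using permutes_in_image[OF \<rho>] by simp
    then have "ws ! (2 * \<rho> j) < n" "ws ! (2 * \<rho> j + 1) < n"
      using ws len by (auto simp: subset_iff)
    then have "X (ws ! (2 * \<rho> j + 1)) (ws ! (2 * \<rho> j)) = - ?f (\<rho> j)"
      using skew by blast
    with pairs[of j] j show "X (ws ! g (2*j)) (ws ! g (2*j+1)) = (if j \<in> sw then -1 else 1) * ?f (\<rho> j)"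
      by auto
  qed
  also have "\<dots> = (\<Prod>j<m. (if j \<in> sw then -1 else 1)) * (\<Prod>j<m. ?f (\<rho> j))"
    by (rule prod.distrib)
  also have "(\<Prod>j<m. ?f (\<rho> j)) = pprod X ws"
    using prod.permute[OF \<rho>, of ?f] len by (simp add: pprod_def o_def)
  also have "(\<Prod>j<m. (if j \<in> sw then -1 else 1)) = ((-1) ^ card sw :: 'a)"
    using sw by (simp add: prod.If_cases Int_absorb1)
  finally show ?thesis .
qed

text \<open>\<open>to_front p\<close> moves position \<open>p\<close> to position 0 and maps the index pairs \<open>{2j, 2j+1}\<close>
  onto index pairs, so it changes \<^const>\<open>pprod\<close> of a skew 2-tensor only by its sign.\<close>

definition to_front :: "nat \<Rightarrow> nat \<Rightarrow> nat" where
  "to_front p = (if p = 1 then transpose 0 1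
     else if even p then transpose 0 p \<circ> transpose 1 (Suc p)
     else transpose 0 p \<circ> transpose 1 (p - 1))"

lemma to_front_permutes:
  assumes "even N" "p < N"
  shows "to_front p permutes {..<N}"
proof -
  have "Suc p < N" if "even p" using assms that by presburger
  moreover have "1 < N" if "odd p" using assms that by presburger
  ultimately show ?thesis using assms
    by (auto simp: to_front_def intro!: permutes_compose permutes_swap_id)
qed

lemma to_front_to_front: "to_front p (to_front p x) = x"
  using odd_pos[of p] by (cases "p = 1"; cases "even p") (auto simp: to_front_def transpose_def)

lemma to_front_self: "to_front p p = 0"
  using odd_pos[of p] by (auto simp: to_front_def transpose_def)

lemma sign_to_front: "sign (to_front p) = (if p = 1 then -1 else 1)"
proof -
  have "sign (transpose 0 p \<circ> transpose 1 (Suc p)) = 1" if "even p"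
    using that by (simp add: sign_compose permutation_swap_id sign_swap_id)
  moreover have "sign (transpose 0 p \<circ> transpose 1 (p - 1)) = 1" if "odd p" "p \<noteq> 1"
  proof -
    have "p \<noteq> 0" "p - 1 \<noteq> 1" using that by presburger+
    then show ?thesis by (simp add: sign_compose permutation_swap_id sign_swap_id)
  qed
  ultimately show ?thesis by (auto simp: to_front_def sign_swap_id)
qed

lemma pprod_permute_to_front:
  assumes len: "length ws = N" and N: "even N" and p: "p < N" and ws: "set ws \<subseteq> {..<n}"
    and skew: "\<forall>i<n. \<forall>j<n. X i j = - X j i"
  shows "pprod X (permute_list (to_front p) ws) = of_int (sign (to_front p)) * pprod X ws"
proof -
  obtain m where m: "N = 2 * m" using N by blast
  have g: "to_front p permutes {..<2*m}" using to_front_permutes[OF N p] m by simp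
  have len': "length ws = 2 * m" using len m by simp
  consider "p = 1" | q where "p = 2 * q" | q where "p = 2 * q + 1" "q \<noteq> 0"
    by (metis evenE oddE mult_0_right add_0)
  then show ?thesis
  proof cases
    case 1
    have "pprod X (permute_list (to_front p) ws) = (-1) ^ card {0::nat} * pprod X ws"
      by (rule pprod_permute_pairs[OF len' ws skew g permutes_id])
         (use p m 1 in \<open>auto simp: to_front_def transpose_def\<close>)
    then show ?thesis using 1 by (simp add: sign_to_front)
  next
    case (2 q)
    have "pprod X (permute_list (to_front p) ws) = (-1) ^ card ({}::nat set) * pprod X ws"
      by (rule pprod_permute_pairs[OF len' ws skew g permutes_swap_id[of 0 "{..<m}" q]])
         (use p m 2 in \<open>auto simp: to_front_def transpose_def\<close>)
    then show ?thesis using 2 by (simp add: sign_to_front)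
  next
    case (3 q)
    have "pprod X (permute_list (to_front p) ws) = (-1) ^ card {0, q} * pprod X ws"
      by (rule pprod_permute_pairs[OF len' ws skew g permutes_swap_id[of 0 "{..<m}" q]])
         (use p m 3 in \<open>auto simp: to_front_def transpose_def\<close>)
    then show ?thesis using 3 by (simp add: sign_to_front)
  qed
qed

section \<open>Index tuples and the Kronecker delta\<close>

lemma sum_tuples_Suc:
  "(\<Sum>cs\<in>tuples n (Suc N). f cs) = (\<Sum>c<n. \<Sum>ds\<in>tuples n N. f (c # ds))"
proof -
  have "(\<Sum>cs\<in>tuples n (Suc N). f cs) = (\<Sum>x\<in>{..<n} \<times> tuples n N. f (fst x # snd x))"
    by (rule sum.reindex_bij_witness[where i="\<lambda>x. (fst x # snd x)" and j="\<lambda>cs. (hd cs, tl cs)"])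
       (auto simp: tuples_def length_Suc_conv)
  also have "\<dots> = (\<Sum>c<n. \<Sum>ds\<in>tuples n N. f (c # ds))"
    by (simp add: sum.cartesian_product case_prod_beta)
  finally show ?thesis .
qed

lemma sum_tuples_permute_list:
  assumes \<pi>: "\<pi> permutes {..<N}"
  shows "(\<Sum>cs\<in>tuples n N. f (permute_list \<pi> cs)) = (\<Sum>cs\<in>tuples n N. f cs)"
proof -
  have inverse: "permute_list (inv \<rho>) (permute_list \<rho> cs) = cs"
    if "\<rho> permutes {..<N}" "length cs = N" for \<rho> cs
    using that by (simp add: permute_list_compose[symmetric] permutes_inv permutes_inv_o)
  show ?thesis
    by (rule sum.reindex_bij_witness[where i="permute_list (inv \<pi>)" and j="permute_list \<pi>"])
       (use \<pi> inverse[of "inv \<pi>"] in \<open>auto simp: tuples_def inverse permutes_inv permutes_inv_inv\<close>)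
qed

lemma sum_mult_delta:
  assumes "b < n"
  shows "(\<Sum>c<n. f c * delta c b) = (f b :: 'a::field_char_0)"
proof -
  have "f c * delta c b = (if c = b then f c else 0)" for c by (simp add: delta_def)
  then show ?thesis using assms by simp
qed

lemma sum_delta_mult:
  assumes "a < n"
  shows "(\<Sum>c<n. delta a c * f c) = (f a :: 'a::field_char_0)"
proof -
  have "delta a c * f c = (if c = a then f c else 0)" for c by (simp add: delta_def)
  then show ?thesis using assms by simp
qed

lemma sum_mult_sub_delta:
  assumes "b < n"
  shows "(\<Sum>c<n. X a c * (Y c b - s * delta c b)) = comp n X Y a b - s * X a b"
proof -
  have "(\<Sum>c<n. X a c * (Y c b - s * delta c b)) = (\<Sum>c<n. X a c * Y c b) - s * (\<Sum>c<n. X a c * delta c b)"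
    by (simp add: right_diff_distrib sum_subtractf sum_distrib_left mult.left_commute)
  then show ?thesis using sum_mult_delta[OF assms, of "X a"] by (simp add: comp_def)
qed

section \<open>The recursions for \<open>Idn\<close> and \<open>Idk\<close>\<close>

context
  fixes A B :: "nat \<Rightarrow> nat \<Rightarrow> 'a::field_char_0" and n k :: nat
  assumes A_skew: "\<forall>i<n. \<forall>j<n. A i j = - A j i"
    and B_skew: "\<forall>i<n. \<forall>j<n. B i j = - B j i"
    and k_even: "even k" and k_ge_2: "k \<ge> 2"
begin

lemma alt_pprod_Cons:
  assumes a: "a < n" and ds: "ds \<in> tuples n (k - 1)"
  shows "alt (pprod A) (a # ds) = alt (\<lambda>ws. pprod A (a # ws)) ds"
proof -
  obtain K where K: "k = Suc K" using k_ge_2 by (cases k) auto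
  have len: "length (a # ds) = Suc K" using ds K by (simp add: tuples_def)
  have "alt (pprod A) (a # ds) = alt (\<lambda>ws. pprod A (hd (a # ds) # ws)) (tl (a # ds))"
  proof (rule alt_eq_alt_tl[OF len, where g=to_front])
    fix p assume "p < Suc K"
    then show "to_front p permutes {..<Suc K} \<and> to_front p p = 0"
      using k_even K to_front_permutes[of "Suc K" p] to_front_self[of p] by simp
  next
    fix p zs assume p: "p < Suc K" and zs: "mset zs = mset (a # ds)"
    have "length zs = Suc K" using mset_eq_length[OF zs] len by simp
    moreover have "set zs \<subseteq> {..<n}"
      using mset_eq_setD[OF zs] a ds by (simp add: tuples_def)
    ultimately show "pprod A (permute_list (to_front p) zs) = of_int (sign (to_front p)) * pprod A zs"
      using p k_even K A_skew by (intro pprod_permute_to_front) simp_all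
  qed
  then show ?thesis by simp
qed

lemma Idk_pred_eq_full_alt:
  assumes a: "a < n"
  shows "Idk n A B (k - 2) a b = (\<Sum>ds\<in>tuples n (k - 1). alt (pprod A) (a # ds) * pprod B (b # ds))"
proof -
  have "alt (\<lambda>xs. A a (xs ! 0) * pprod A (drop 1 xs)) ds * B b (ds ! 0) * pprod B (drop 1 ds)
      = alt (pprod A) (a # ds) * pprod B (b # ds)" if ds: "ds \<in> tuples n (k - 1)" for ds
  proof -
    obtain d ds' where d: "ds = d # ds'"
      using ds k_ge_2 by (cases ds) (auto simp: tuples_def)
    have "alt (\<lambda>xs. A a (xs ! 0) * pprod A (drop 1 xs)) ds = alt (\<lambda>ws. pprod A (a # ws)) ds"
    proof (rule alt_cong)
      fix ys :: "nat list" assume "length ys = length ds"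
      then obtain y ys' where "ys = y # ys'" using d by (cases ys) auto
      then show "A a (ys ! 0) * pprod A (drop 1 ys) = pprod A (a # ys)" by (simp add: pprod_Cons_Cons)
    qed
    then show ?thesis
      using alt_pprod_Cons[OF a ds] by (simp add: d pprod_Cons_Cons mult.assoc)
  qed
  moreover have "k - 2 + 1 = k - 1" using k_ge_2 by simp
  ultimately show ?thesis
    unfolding Idk_def by (intro sum.cong) simp_all
qed

lemma tr_Idk_pred: "tr n (Idk n A B (k - 2)) = (\<Sum>cs\<in>tuples n k. alt (pprod A) cs * pprod B cs)"
proof -
  obtain K where K: "k = Suc K" using k_ge_2 by (cases k) auto
  have "tr n (Idk n A B (k - 2)) = (\<Sum>c<n. \<Sum>ds\<in>tuples n (k - 1). alt (pprod A) (c # ds) * pprod B (c # ds))"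
    unfolding tr_def by (rule sum.cong[OF refl]) (simp add: Idk_pred_eq_full_alt)
  also have "\<dots> = (\<Sum>cs\<in>tuples n k. alt (pprod A) cs * pprod B cs)"
    by (simp only: K diff_Suc_1 sum_tuples_Suc)
  finally show ?thesis .
qed

lemma sum_tuples_update_eq_update_0:
  assumes i: "i < k"
  shows "(\<Sum>ws\<in>tuples n k. u (ws ! i) * alt G (ws[i := c]) * pprod B ws)
       = (\<Sum>ws\<in>tuples n k. u (ws ! 0) * alt G (ws[0 := c]) * pprod B ws)"
proof -
  let ?g = "to_front i"
  have g: "?g permutes {..<k}" using i k_even by (intro to_front_permutes)
  have g_eq_0: "?g j = 0 \<longleftrightarrow> j = i" for j
    by (metis to_front_to_front to_front_self)
  have "(\<Sum>ws\<in>tuples n k. u (ws ! i) * alt G (ws[i := c]) * pprod B ws)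
     = (\<Sum>ws\<in>tuples n k. u (permute_list ?g ws ! i) * alt G ((permute_list ?g ws)[i := c]) * pprod B (permute_list ?g ws))"
    by (rule sum_tuples_permute_list[OF g, symmetric])
  also have "\<dots> = (\<Sum>ws\<in>tuples n k. u (ws ! 0) * alt G (ws[0 := c]) * pprod B ws)"
  proof (rule sum.cong[OF refl])
    fix ws assume ws: "ws \<in> tuples n k"
    then have len: "length ws = k" by (simp add: tuples_def)
    have "(permute_list ?g ws)[i := c] = permute_list ?g (ws[0 := c])"
    proof (rule nth_equalityI)
      fix j assume "j < length ((permute_list ?g ws)[i := c])"
      moreover from this have "?g j < k" using len permutes_in_image[OF g, of j] by simp
      ultimately show "(permute_list ?g ws)[i := c] ! j = permute_list ?g (ws[0 := c]) ! j"
        using len g by (simp add: permute_list_nth nth_list_update g_eq_0)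
    qed simp
    then have "alt G ((permute_list ?g ws)[i := c]) = of_int (sign ?g) * alt G (ws[0 := c])"
      using g len by (simp add: alt_permute_list)
    moreover have "pprod B (permute_list ?g ws) = of_int (sign ?g) * pprod B ws"
      using ws i k_even B_skew by (intro pprod_permute_to_front) (simp_all add: tuples_def)
    moreover have "permute_list ?g ws ! i = ws ! 0"
      using len i g by (simp add: permute_list_nth to_front_self)
    ultimately show "u (permute_list ?g ws ! i) * alt G ((permute_list ?g ws)[i := c]) * pprod B (permute_list ?g ws)
        = u (ws ! 0) * alt G (ws[0 := c]) * pprod B ws"
      by (simp add: algebra_simps of_int_sign_mult_self)
  qed
  finally show ?thesis .
qed

lemma sum_alt_Cons_mult_pprod:
  assumes a: "a < n"
  shows "(\<Sum>cs\<in>tuples n k. alt (\<lambda>xs. u (xs ! 0) * pprod A (drop 1 xs)) (a # cs) * pprod B cs)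
       = 1 / of_nat (Suc k) * (u a * tr n (Idk n A B (k - 2))
           - of_nat k * (\<Sum>d<n. u d * Idk n A B (k - 2) a d))"
proof -
  let ?S = "\<Sum>cs\<in>tuples n k. alt (pprod A) cs * pprod B cs"
  let ?W = "\<lambda>i. \<Sum>cs\<in>tuples n k. u (cs ! i) * alt (pprod A) (cs[i := a]) * pprod B cs"
  have "(\<Sum>cs\<in>tuples n k. alt (\<lambda>xs. u (xs ! 0) * pprod A (drop 1 xs)) (a # cs) * pprod B cs)
     = (\<Sum>cs\<in>tuples n k. 1 / of_nat (Suc k) * (u a * alt (pprod A) cs
         - (\<Sum>i<k. u (cs ! i) * alt (pprod A) (cs[i := a]))) * pprod B cs)"
  proof (rule sum.cong[OF refl])
    fix cs assume "cs \<in> tuples n k"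
    then have "length cs = k" by (simp add: tuples_def)
    from alt_Cons_expand[OF this, of u "pprod A" a]
    show "alt (\<lambda>xs. u (xs ! 0) * pprod A (drop 1 xs)) (a # cs) * pprod B cs
        = 1 / of_nat (Suc k) * (u a * alt (pprod A) cs
         - (\<Sum>i<k. u (cs ! i) * alt (pprod A) (cs[i := a]))) * pprod B cs"
      by simp
  qed
  also have "\<dots> = 1 / of_nat (Suc k) * (u a * ?S - (\<Sum>i<k. ?W i))"
    by (simp add: sum_distrib_left sum_distrib_right sum_subtractf left_diff_distrib right_diff_distrib
        sum.swap[of _ "{..<k}"] mult.assoc)
  also have "(\<Sum>i<k. ?W i) = (\<Sum>i<k. ?W 0)"
    by (rule sum.cong[OF refl]) (rule sum_tuples_update_eq_update_0, simp)
  also have "?W 0 = (\<Sum>d<n. u d * Idk n A B (k - 2) a d)"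
  proof -
    obtain K where K: "k = Suc K" using k_ge_2 by (cases k) auto
    have "?W 0 = (\<Sum>d<n. u d * (\<Sum>es\<in>tuples n (k - 1). alt (pprod A) (a # es) * pprod B (d # es)))"
      by (simp only: K diff_Suc_1 sum_tuples_Suc nth_Cons_0 list_update_code sum_distrib_left mult.assoc)
    then show ?thesis using a by (simp add: Idk_pred_eq_full_alt)
  qed
  finally show ?thesis by (simp add: tr_Idk_pred)
qed

lemma sum_B_mult_Idk_pred_swap:
  assumes d: "d < n"
  shows "(\<Sum>c<n. B b c * Idk n A B (k - 2) c d) = (\<Sum>c<n. B c d * Idk n A B (k - 2) c b)"
proof -
  let ?T = "tuples n (k - 2)"
  have k: "k - 1 = Suc (k - 2)" using k_ge_2 by simp
  have "(\<Sum>c<n. B b c * Idk n A B (k - 2) c d)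
     = (\<Sum>c<n. \<Sum>e<n. \<Sum>fs\<in>?T. B b c * alt (pprod A) (c # e # fs) * (B d e * pprod B fs))"
    by (intro sum.cong refl)
       (simp only: lessThan_iff Idk_pred_eq_full_alt k sum_tuples_Suc pprod_Cons_Cons sum_distrib_left mult.assoc)
  also have "\<dots> = (\<Sum>c<n. \<Sum>e<n. \<Sum>fs\<in>?T. - (B b c * alt (pprod A) (e # c # fs) * B d e * pprod B fs))"
    by (intro sum.cong refl) (subst alt_swap_Cons_Cons, simp add: algebra_simps)
  also have "\<dots> = (\<Sum>e<n. \<Sum>c<n. \<Sum>fs\<in>?T. - (B b c * alt (pprod A) (e # c # fs) * B d e * pprod B fs))"
    by (rule sum.swap)
  also have "\<dots> = (\<Sum>c<n. \<Sum>e<n. \<Sum>fs\<in>?T. B c d * alt (pprod A) (c # e # fs) * (B b e * pprod B fs))"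
  proof (intro sum.cong refl)
    fix c e fs assume "c \<in> {..<n}"
    then have "B d c = - B c d" using B_skew d by blast
    then show "- (B b e * alt (pprod A) (c # e # fs) * B d c * pprod B fs)
        = B c d * alt (pprod A) (c # e # fs) * (B b e * pprod B fs)"
      by (simp add: algebra_simps)
  qed
  also have "\<dots> = (\<Sum>c<n. B c d * Idk n A B (k - 2) c b)"
    by (intro sum.cong refl)
       (simp only: lessThan_iff Idk_pred_eq_full_alt k sum_tuples_Suc pprod_Cons_Cons sum_distrib_left mult.assoc)
  finally show ?thesis .
qed

lemma Idn_eq:
  assumes "a < n" "b < n"
  shows "Idn n A B k a b = 1 / of_nat (Suc k) *
    (delta a b * tr n (Idk n A B (k - 2)) - of_nat k * Idk n A B (k - 2) a b)"
  unfolding Idn_def sum_alt_Cons_mult_pprod[OF assms(1), of "\<lambda>c. delta c b"]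
  using assms(2) by (simp add: sum_mult_delta mult.commute[of "delta _ b"])

lemma Idk_eq:
  assumes a: "a < n"
  shows "Idk n A B k a b = 1 / of_nat (Suc k) *
    (Pt n A B a b * tr n (Idk n A B (k - 2)) - of_nat k * comp n (Pt n A B) (Idk n A B (k - 2)) a b)"
proof -
  let ?I = "Idk n A B (k - 2)"
  let ?W = "\<lambda>c. \<Sum>d<n. A a d * ?I c d"
  have drop_Cons: "drop 1 (c # cs) = cs" for c :: nat and cs by simp
  have "Idk n A B k a b = (\<Sum>c<n. \<Sum>cs\<in>tuples n k.
      alt (\<lambda>xs. A a (xs ! 0) * pprod A (drop 1 xs)) (c # cs) * B b c * pprod B cs)"
    unfolding Idk_def Suc_eq_plus1[symmetric] sum_tuples_Suc nth_Cons_0 drop_Cons ..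
  also have "\<dots> = (\<Sum>c<n. B b c * (1 / of_nat (Suc k) * (A a c * tr n ?I - of_nat k * ?W c)))"
  proof (rule sum.cong[OF refl])
    fix c assume "c \<in> {..<n}"
    have "(\<Sum>cs\<in>tuples n k. alt (\<lambda>xs. A a (xs ! 0) * pprod A (drop 1 xs)) (c # cs) * B b c * pprod B cs)
        = B b c * (\<Sum>cs\<in>tuples n k. alt (\<lambda>xs. A a (xs ! 0) * pprod A (drop 1 xs)) (c # cs) * pprod B cs)"
      by (simp add: sum_distrib_left mult_ac)
    also have "\<dots> = B b c * (1 / of_nat (Suc k) * (A a c * tr n ?I - of_nat k * ?W c))"
      using \<open>c \<in> {..<n}\<close> by (simp only: lessThan_iff sum_alt_Cons_mult_pprod[of c "A a"])
    finally show "(\<Sum>cs\<in>tuples n k. alt (\<lambda>xs. A a (xs ! 0) * pprod A (drop 1 xs)) (c # cs) * B b c * pprod B cs)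
        = B b c * (1 / of_nat (Suc k) * (A a c * tr n ?I - of_nat k * ?W c))" .
  qed
  also have "\<dots> = 1 / of_nat (Suc k) * ((\<Sum>c<n. A a c * B b c) * tr n ?I - of_nat k * (\<Sum>c<n. B b c * ?W c))"
    by (simp add: sum_distrib_left sum_distrib_right sum_subtractf right_diff_distrib mult_ac)
  also have "(\<Sum>c<n. B b c * ?W c) = comp n (Pt n A B) ?I a b"
  proof -
    have "(\<Sum>c<n. B b c * ?W c) = (\<Sum>c<n. \<Sum>d<n. A a d * (B b c * ?I c d))"
      by (simp add: sum_distrib_left mult.left_commute)
    also have "\<dots> = (\<Sum>d<n. \<Sum>c<n. A a d * (B b c * ?I c d))"
      by (rule sum.swap)
    also have "\<dots> = (\<Sum>d<n. \<Sum>c<n. A a d * (B c d * ?I c b))"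
      by (rule sum.cong[OF refl]) (simp add: sum_distrib_left[symmetric] sum_B_mult_Idk_pred_swap)
    also have "\<dots> = (\<Sum>c<n. \<Sum>d<n. A a d * B c d * ?I c b)"
      by (subst sum.swap) (simp add: mult.assoc)
    also have "\<dots> = comp n (Pt n A B) ?I a b"
      by (simp add: comp_def Pt_def sum_distrib_right)
    finally show ?thesis .
  qed
  finally show ?thesis by (simp add: Pt_def)
qed

end

lemma tr_Tt: "tr n (Tt n A B) = (1 - of_nat n / 4) * tr n (Pt n A B)"
proof -
  have "tr n (Tt n A B) = tr n (Pt n A B) - (\<Sum>c<n. 1/4 * tr n (Pt n A B))"
    unfolding tr_def[of n "Tt n A B"] Tt_def by (simp add: sum_subtractf delta_def tr_def)
  then show ?thesis by (simp add: algebra_simps)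
qed

lemma comp_Tt:
  assumes "a < n"
  shows "comp n (Tt n A B) X a b = comp n (Pt n A B) X a b - 1/4 * tr n (Pt n A B) * X a b"
proof -
  have "comp n (Tt n A B) X a b = comp n (Pt n A B) X a b - 1/4 * tr n (Pt n A B) * (\<Sum>c<n. delta a c * X c b)"
    unfolding comp_def Tt_def left_diff_distrib sum_subtractf by (simp add: sum_distrib_left mult.assoc)
  then show ?thesis using sum_delta_mult[OF assms, of "\<lambda>c. X c b"] by simp
qed

lemma Tt_bracket_eq_Pt_bracket:
  fixes K :: "'a::field_char_0"
  assumes n: "n \<noteq> 4" and a: "a < n"
  shows "comp n (Tt n A B) X a b - 1 / (of_nat n - 4) * tr n (Tt n A B) * X a b
      - 1 / K * tr n X * Tt n A B a b + 1 / (K * (of_nat n - 4)) * tr n (Tt n A B) * tr n X * delta a b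
    = comp n (Pt n A B) X a b - 1 / K * tr n X * Pt n A B a b"
proof -
  have "(of_nat n - 4 :: 'a) \<noteq> 0"
    using n of_nat_eq_iff[of n 4] by simp
  then have trT: "1 / (of_nat n - 4) * tr n (Tt n A B) = - 1/4 * tr n (Pt n A B)"
    by (simp add: tr_Tt field_simps)
  have "1 / (K * (of_nat n - 4)) * tr n (Tt n A B) = 1 / K * (1 / (of_nat n - 4) * tr n (Tt n A B))"
    by simp
  also have "\<dots> = 1 / K * (- 1/4 * tr n (Pt n A B))"
    by (simp only: trT)
  finally have trT': "1 / (K * (of_nat n - 4)) * tr n (Tt n A B) = 1 / K * (- 1/4 * tr n (Pt n A B))" .
  show ?thesis
    unfolding trT trT' comp_Tt[OF a] Tt_def by (simp add: algebra_simps)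
qed

lemma recursion_coefficient:
  fixes K :: "'a::field"
  assumes "K \<noteq> 0" "K + 1 \<noteq> 0"
  shows "1 / (1 + K) * (d * x - K * y) = - (K / (K + 1)) * (y - 1 / K * x * d)"
proof -
  have "1 + K \<noteq> 0" "K * (1 + K) \<noteq> 0" using assms by (simp_all add: add.commute)
  then show ?thesis using assms by (simp add: field_simps)
qed

theorem theorem9:
  fixes A B :: "nat \<Rightarrow> nat \<Rightarrow> 'a::field_char_0" and n k :: nat
  assumes A_skew: "\<forall>i<n. \<forall>j<n. A i j = - A j i"
    and B_skew: "\<forall>i<n. \<forall>j<n. B i j = - B j i"
    and k: "even k" "k \<ge> 2"
  shows "(\<forall>a<n. \<forall>b<n. Idn n A B k a b =
            - (of_nat k / (of_nat k + 1)) *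
              (Idk n A B (k-2) a b - (1 / of_nat k) * tr n (Idk n A B (k-2)) * delta a b))
       \<and> (\<forall>a<n. \<forall>b<n. Idk n A B k a b =
            - (of_nat k / (of_nat k + 1)) *
              (\<Sum>c<n. Pt n A B a c *
                 (Idk n A B (k-2) c b - (1 / of_nat k) * tr n (Idk n A B (k-2)) * delta c b)))
       \<and> (n \<noteq> 4 \<longrightarrow> (\<forall>a<n. \<forall>b<n. Idk n A B k a b =
            - (of_nat k / (of_nat k + 1)) *
              (comp n (Tt n A B) (Idk n A B (k-2)) a b
               - (1 / (of_nat n - 4)) * tr n (Tt n A B) * Idk n A B (k-2) a b
               - (1 / of_nat k) * tr n (Idk n A B (k-2)) * Tt n A B a b
               + (1 / (of_nat k * (of_nat n - 4))) * tr n (Tt n A B) * tr n (Idk n A B (k-2)) * delta a b)))"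
proof -
  let ?I = "Idk n A B (k - 2)" and ?P = "Pt n A B"
  have K: "(of_nat k :: 'a) \<noteq> 0" "(of_nat k :: 'a) + 1 \<noteq> 0"
    using k(2) of_nat_neq_0[of k] by (simp_all add: add.commute)
  have Idk_rec: "Idk n A B k a b = - (of_nat k / (of_nat k + 1)) *
      (comp n ?P ?I a b - 1 / of_nat k * tr n ?I * ?P a b)" if "a < n" for a b
    unfolding Idk_eq[OF A_skew B_skew k that] of_nat_Suc by (rule recursion_coefficient[OF K])
  have Idn_rec: "Idn n A B k a b = - (of_nat k / (of_nat k + 1)) *
      (?I a b - 1 / of_nat k * tr n ?I * delta a b)" if "a < n" "b < n" for a b
    unfolding Idn_eq[OF A_skew B_skew k that] of_nat_Suc by (rule recursion_coefficient[OF K])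
  show ?thesis
    \<comment> \<open>\<open>simp only\<close>: the rules must meet the statement before its arithmetic is normalised\<close>
    by (intro conjI allI impI)
       (simp_all only: Idn_rec Idk_rec sum_mult_sub_delta Tt_bracket_eq_Pt_bracket not_False_eq_True)
qed

end
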